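(* Let $\rho$ be an $n$-qubit state, fix a threshold $\varepsilon\ge0$, and let $A_1,\dots,A_t\in\mathrm{GL}(n,2)$ be the gauges queried so far, $A_r$ with columns $\mathbf{a}_{r,1},\dots,\mathbf{a}_{r,n}$. Let $Q_t=\{\mathbf{a}_{r,i}:r\le t,\ i\le n\}$, $\mathcal{F}_t=\{p\in\Delta(\mathbb{F}_2^n):\widehat p(\mathbf{u})=\mu_\rho(\mathbf{u})\ \forall\mathbf{u}\in Q_t\}$, and let $p_t^-\in\arg\min_{p\in\mathcal{F}_t}p(\mathbf{0})$, $p_t^+\in\arg\max_{p\in\mathcal{F}_t}p(\mathbf{0})$ be any endpoint optimizers, $W_t=p_t^+(\mathbf{0})-p_t^-(\mathbf{0})$. Define $d_t(\mathbf{u})=|\widehat{p_t^+}(\mathbf{u})-\widehat{p_t^-}(\mathbf{u})|$ for $\mathbf{u}\neq\mathbf{0}$, $M_t=(\mathbb{F}_2^n\setminus\{\mathbf{0}\})\setminus Q_t$, $m_t=|M_t|$, $D_t=\sum_{\mathbf{u}\in M_t}d_t(\mathbf{u})$, $\Delta_t=\max_{\mathbf{u}\in M_t}d_t(\mathbf{u})$. For a gauge $A$ with columns $\mathbf{a}_1,\dots,\mathbf{a}_n$ put $\Phi_t(A)=\sum_{i=1}^n d_t(\mathbf{a}_i)$, let $\Gamma_t=\{A\in\mathrm{GL}(n,2): \{\mathbf{a}_1,\dots,\mathbf{a}_n\}\not\subseteq Q_t\}$, and let $A_{t+1}\in\arg\max_{A\in\Gamma_t}\Phi_t(A)$. Suppose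 round $t$ is nonterminal, i.e. $W_t>\varepsilon$. Then $$W_t\le 2^{-n}D_t\le\frac{m_t}{2^n}\Delta_t,\qquad\text{and}\qquad \Phi_t(A_{t+1})\ge\Delta_t\ge\frac{2^n}{m_t}W_t.$$
   Context: Setting: $|\psi\rangle$ is an $n$-qubit stabilizer state whose stabilizer group is generated by independent commuting Pauli operators $g_1,\dots,g_n$; $g(\mathbf{u})=\prod_j g_j^{u_j}$ for $\mathbf{u}\in\mathbb{F}_2^n$. Syndrome projectors $\Pi_{\mathbf{s}}=2^{-n}\prod_j(I+(-1)^{s_j}g_j)$ are orthogonal rank-one projectors summing to identity with $\Pi_{\mathbf{0}}=|\psi\rangle\langle\psi|$. $p_\rho(\mathbf{s})=\mathrm{tr}(\rho\Pi_{\mathbf{s}})$, $\mu_\rho(\mathbf{u})=\mathrm{tr}(\rho g(\mathbf{u}))=\widehat{p_\rho}(\mathbf{u})$ with Walsh transform $\widehat p(\mathbf{u})=\sum_{\mathbf{s}}(-1)^{\mathbf{u}\cdot\mathbf{s}}p(\mathbf{s})$ (mod-2 inner product). $\Delta(\mathbb{F}_2^n)$ is the set of probability distributions on $\mathbb{F}_2^n$; $\mathrm{GL}(n,2)$ the invertible binary $n\times n$ matrices, whose columns are called the labels queried by that gauge. *)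

theory Defs
  imports "HOL-Analysis.Analysis" "HOL-Library.Z2"
begin

text \<open>Vectors of F_2^n are modelled as bit ^ 'n, where the finite index type 'n
  has CARD('n) = n elements. Gauges are invertible matrices bit ^ 'n ^ 'n,
  and the labels queried by a gauge A are its columns, column i A.\<close>

definition f2dot :: "bit ^ 'n \<Rightarrow> bit ^ 'n \<Rightarrow> bit" where
  "f2dot u s = (\<Sum>i\<in>UNIV. u $ i * s $ i)"

definition walsh :: "(bit ^ 'n \<Rightarrow> real) \<Rightarrow> bit ^ 'n \<Rightarrow> real" where
  "walsh p u = (\<Sum>s\<in>UNIV. (if f2dot u s = 0 then 1 else -1) * p s)"

definition prob_dist :: "(bit ^ 'n \<Rightarrow> real) \<Rightarrow> bool" where
  "prob_dist p \<longleftrightarrow> (\<forall>s. 0 \<le> p s) \<and> (\<Sum>s\<in>UNIV. p s) = 1"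

definition queried :: "(nat \<Rightarrow> bit ^ 'n ^ 'n) \<Rightarrow> nat \<Rightarrow> (bit ^ 'n) set" where
  "queried As t = {column i (As r) | r i. r \<in> {1..t}}"

definition feasible :: "(bit ^ 'n \<Rightarrow> real) \<Rightarrow> (bit ^ 'n) set \<Rightarrow> (bit ^ 'n \<Rightarrow> real) set" where
  "feasible prho Q = {p. prob_dist p \<and> (\<forall>u\<in>Q. walsh p u = walsh prho u)}"

definition gap :: "(bit ^ 'n \<Rightarrow> real) \<Rightarrow> (bit ^ 'n \<Rightarrow> real) \<Rightarrow> bit ^ 'n \<Rightarrow> real" where
  "gap pplus pminus u = \<bar>walsh pplus u - walsh pminus u\<bar>"

definition missing :: "(bit ^ 'n) set \<Rightarrow> (bit ^ 'n) set" where
  "missing Q = (UNIV - {0}) - Q"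

definition score :: "(bit ^ 'n \<Rightarrow> real) \<Rightarrow> (bit ^ 'n \<Rightarrow> real) \<Rightarrow> bit ^ 'n ^ 'n \<Rightarrow> real" where
  "score pplus pminus A = (\<Sum>i\<in>UNIV. gap pplus pminus (column i A))"

definition candidates :: "(bit ^ 'n) set \<Rightarrow> (bit ^ 'n ^ 'n) set" where
  "candidates Q = {A. invertible A \<and> \<not> (columns A \<subseteq> Q)}"

end

theory Submission
  imports Defs
begin

text \<open>Walsh inversion at the origin gives 2^n p(0) = sum over u of hat p(u). Two feasible
  distributions have the same transform at 0 (both are normalised) and on every queried label,
  so 2^n times the width W_t is a sum of transform differences over the missing labels, whence
  W_t \<le> 2^-n D_t \<le> 2^-n m_t \<Delta>_t. Conversely every nonzero label is a column of some
  invertible gauge, so a gauge containing the missing label that attains \<Delta>_t is a candidate,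
  and the score of the greedy choice is at least \<Delta>_t.\<close>

\<comment> \<open>By default Z2 rewrites the field operations on bit into bitwise xor/and.\<close>
declare add_bit_eq_xor [simp del] mult_bit_eq_and [simp del]

lemma UNIV_bit: "(UNIV :: bit set) = {0, 1}"
  using bit.exhaust by auto

lemma card_UNIV_bit [simp]: "CARD(bit) = 2"
  by (simp add: UNIV_bit)

lemma finite_UNIV_bit_vec [simp]: "finite (UNIV :: (bit ^ 'n) set)"
  by (rule card_ge_0_finite) simp

lemma bit_add_self [simp]: "(b :: bit) + b = 0"
  by (cases b) simp_all

lemma bit_vec_add_self [simp]: "(v :: bit ^ 'n) + v = 0"
  by (simp add: vec_eq_iff)

lemma f2dot_add_left: "f2dot (u + v) s = f2dot u s + f2dot v s"
  unfolding f2dot_def by (simp add: distrib_right sum.distrib)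

lemma f2dot_axis_left: "f2dot (axis k 1) s = s $ k"
  unfolding f2dot_def axis_def by (simp add: if_distrib[of "\<lambda>b. b * _"] cong: if_cong)

lemma f2dot_zero_right [simp]: "f2dot u 0 = 0"
  unfolding f2dot_def by simp

lemma sum_character:
  fixes s :: "bit ^ 'n"
  shows "(\<Sum>u\<in>UNIV. if f2dot u s = 0 then 1 else -1 :: real)
           = (if s = 0 then 2 ^ CARD('n) else 0)"
proof (cases "s = 0")
  case False
  then obtain k where k: "s $ k = 1"
    by (metis bit_not_zero_iff vec_eq_iff zero_index)
  let ?\<chi> = "\<lambda>u. if f2dot u s = 0 then 1 else -1 :: real"
  have flip: "?\<chi> (u + axis k 1) = - ?\<chi> u" for u
    using k by (cases "f2dot u s") (simp_all add: f2dot_add_left f2dot_axis_left)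
  have "(\<Sum>u\<in>UNIV. ?\<chi> u) = (\<Sum>u\<in>UNIV. ?\<chi> (u + axis k 1))"
    by (rule sum.reindex_bij_witness[of _ "\<lambda>u. u + axis k 1" "\<lambda>u. u + axis k 1"])
      (simp_all add: add.assoc)
  also have "\<dots> = - (\<Sum>u\<in>UNIV. ?\<chi> u)"
    by (simp add: flip sum_negf)
  finally show ?thesis
    using False by simp
qed simp

lemma sum_walsh:
  fixes p :: "bit ^ 'n \<Rightarrow> real"
  shows "(\<Sum>u\<in>UNIV. walsh p u) = 2 ^ CARD('n) * p 0"
proof -
  have "(\<Sum>u\<in>UNIV. walsh p u)
      = (\<Sum>s\<in>UNIV. p s * (\<Sum>u\<in>UNIV. if f2dot u s = 0 then 1 else -1 :: real))"
    unfolding walsh_def by (subst sum.swap) (simp add: sum_distrib_left mult.commute)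
  also have "\<dots> = (\<Sum>s\<in>UNIV. if s = 0 then 2 ^ CARD('n) * p s else 0)"
    by (simp add: sum_character if_distrib cong: if_cong)
  finally show ?thesis
    by simp
qed

lemma walsh_zero_prob_dist: "prob_dist p \<Longrightarrow> walsh p 0 = 1"
  unfolding walsh_def prob_dist_def f2dot_def by simp

lemma feasible_width_eq_sum_missing:
  fixes p q :: "bit ^ 'n \<Rightarrow> real"
  assumes "p \<in> feasible prho Q" and "q \<in> feasible prho Q"
  shows "2 ^ CARD('n) * (p 0 - q 0) = (\<Sum>u\<in>missing Q. walsh p u - walsh q u)"
proof -
  have "2 ^ CARD('n) * (p 0 - q 0) = (\<Sum>u\<in>UNIV. walsh p u - walsh q u)"
    by (simp add: sum_walsh sum_subtractf right_diff_distrib)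
  also have "\<dots> = (\<Sum>u\<in>missing Q. walsh p u - walsh q u)"
    using assms by (intro sum.mono_neutral_right)
      (auto simp: missing_def feasible_def walsh_zero_prob_dist)
  finally show ?thesis .
qed

lemma feasible_width_le_sum_gap:
  fixes p q :: "bit ^ 'n \<Rightarrow> real"
  assumes "p \<in> feasible prho Q" and "q \<in> feasible prho Q"
  shows "p 0 - q 0 \<le> (\<Sum>u\<in>missing Q. gap p q u) / 2 ^ CARD('n)"
proof -
  have "2 ^ CARD('n) * (p 0 - q 0) \<le> (\<Sum>u\<in>missing Q. gap p q u)"
    unfolding feasible_width_eq_sum_missing[OF assms] gap_def by (rule sum_mono) simp
  then show ?thesis
    by (simp add: field_simps)
qed

lemma exists_invertible_with_column:
  fixes u :: "bit ^ 'n"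
  assumes "u \<noteq> 0"
  shows "\<exists>E :: bit ^ 'n ^ 'n. invertible E \<and> u \<in> columns E"
proof -
  obtain k where k: "u $ k = 1"
    using assms by (metis bit_not_zero_iff vec_eq_iff zero_index)
  define w where "w = u + axis k 1"
  \<comment> \<open>The identity with its k-th column replaced by u; since u $ k = 1 it is an involution.\<close>
  define E :: "bit ^ 'n ^ 'n" where "E = mat 1 + (\<chi> i j. if j = k then w $ i else 0)"
  have "(\<chi> i j. if j = k then w $ i else 0) *v x = x $ k *s w" for x
    by (simp add: matrix_vector_mult_def vec_eq_iff mult.commute if_distrib[of "times _"]
        cong: if_cong)
  then have E_mult: "E *v x = x + x $ k *s w" for x
    by (simp add: E_def matrix_vector_mult_add_rdistrib)
  have "w $ k = 0"
    using k by (simp add: w_def)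
  then have "E *v (E *v x) = x" for x
    by (simp add: E_mult vec_eq_iff add.assoc)
  then have "E ** E = mat 1"
    by (simp add: matrix_eq flip: matrix_vector_mul_assoc)
  then have "invertible E"
    using invertible_right_inverse by blast
  moreover have "column k E = u"
    by (simp add: column_def E_def w_def vec_eq_iff mat_def axis_def)
  ultimately show ?thesis
    unfolding columns_def by blast
qed

lemma gap_le_score_of_candidate:
  fixes Q :: "(bit ^ 'n) set"
  assumes "u \<in> missing Q"
  shows "\<exists>A \<in> candidates Q. gap p q u \<le> score p q A"
proof -
  from assms have "u \<noteq> 0" and "u \<notin> Q"
    by (auto simp: missing_def)
  then obtain A :: "bit ^ 'n ^ 'n" where "invertible A" and "u \<in> columns A"
    using exists_invertible_with_column by blast
  then obtain i where "column i A = u" and "A \<in> candidates Q"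
    using \<open>u \<notin> Q\<close> by (auto simp: columns_def candidates_def)
  moreover have "gap p q (column i A) \<le> score p q A"
    unfolding score_def by (rule member_le_sum) (simp_all add: gap_def)
  ultimately show ?thesis
    by blast
qed

theorem proposition8:
  fixes prho :: "bit ^ 'n \<Rightarrow> real"
    and \<epsilon> :: real
    and t :: nat
    and As :: "nat \<Rightarrow> bit ^ 'n ^ 'n"
    and pminus pplus :: "bit ^ 'n \<Rightarrow> real"
    and Anext :: "bit ^ 'n ^ 'n"
  assumes prho: "prob_dist prho"
    and eps: "\<epsilon> \<ge> 0"
    and gauges: "\<forall>r\<in>{1..t}. invertible (As r)"
    and pminus: "pminus \<in> feasible prho (queried As t)"
      "\<forall>p\<in>feasible prho (queried As t). pminus 0 \<le> p 0"
    and pplus: "pplus \<in> feasible prho (queried As t)"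
      "\<forall>p\<in>feasible prho (queried As t). p 0 \<le> pplus 0"
    and Anext: "Anext \<in> candidates (queried As t)"
      "\<forall>A\<in>candidates (queried As t). score pplus pminus A \<le> score pplus pminus Anext"
    and nonterm: "pplus 0 - pminus 0 > \<epsilon>"
  shows "pplus 0 - pminus 0
           \<le> (\<Sum>u\<in>missing (queried As t). gap pplus pminus u) / 2 ^ CARD('n)
         \<and> (\<Sum>u\<in>missing (queried As t). gap pplus pminus u) / 2 ^ CARD('n)
           \<le> real (card (missing (queried As t))) / 2 ^ CARD('n)
              * Max (gap pplus pminus ` missing (queried As t))
         \<and> score pplus pminus Anext \<ge> Max (gap pplus pminus ` missing (queried As t))
         \<and> Max (gap pplus pminus ` missing (queried As t))
           \<ge> 2 ^ CARD('n) / real (card (missing (queried As t))) * (pplus 0 - pminus 0)"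
proof -
  define M where "M = missing (queried As t)"
  define g where "g = gap pplus pminus"
  define W where "W = pplus 0 - pminus 0"
  have width_le: "W \<le> sum g M / 2 ^ CARD('n)"
    unfolding W_def g_def M_def using pplus(1) pminus(1) by (rule feasible_width_le_sum_gap)
  have "finite M"
    by (rule finite_subset[OF subset_UNIV]) simp
  moreover have "M \<noteq> {}"
    using width_le nonterm eps by (auto simp: W_def)
  ultimately have "0 < card M"
    by (simp add: card_gt_0_iff)
  have sum_le: "sum g M \<le> card M * Max (g ` M)"
    using \<open>finite M\<close> by (intro sum_bounded_above) simp
  have "g u \<le> score pplus pminus Anext" if "u \<in> M" for u
    using gap_le_score_of_candidate[where p = pplus and q = pminus] that Anext(2)
    unfolding M_def g_def by force
  then have Max_le: "Max (g ` M) \<le> score pplus pminus Anext"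
    using \<open>finite M\<close> \<open>M \<noteq> {}\<close> by simp
  have "2 ^ CARD('n) * W \<le> card M * Max (g ` M)"
    using width_le sum_le by (simp add: field_simps)
  then have "2 ^ CARD('n) / card M * W \<le> Max (g ` M)"
    using \<open>0 < card M\<close> by (simp add: field_simps)
  with width_le sum_le Max_le show ?thesis
    unfolding M_def g_def W_def by (simp add: divide_right_mono)
qed

end
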